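(* Every Euclidean domain that does not contain a field (as a subring) is Egyptian.
   Context: A Euclidean function on an integral domain $D$ is a function $f: D\setminus\{0\} \to \mathbb{Z}$ such that for all nonzero $a,b \in D$: (1) $f(ab) \geq f(a)$, and (2) there exist $q,r \in D$ with $b = aq + r$ and either $r=0$ or $f(r) < f(a)$. A Euclidean domain is an integral domain admitting a Euclidean function. With $K$ the fraction field of $D$, $D$ is Egyptian if every nonzero element of $K$ is a sum of reciprocals of distinct nonzero elements of $D$. *)

theory Defs
  imports "HOL-Computational_Algebra.Fraction_Field"
begin

definition euclidean_function :: "('a::idom \<Rightarrow> int) \<Rightarrow> bool" where
  "euclidean_function f \<longleftrightarrow>
     (\<forall>a b. a \<noteq> 0 \<longrightarrow> b \<noteq> 0 \<longrightarrow> f (a * b) \<ge> f a) \<and>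
     (\<forall>a b. a \<noteq> 0 \<longrightarrow> b \<noteq> 0 \<longrightarrow>
        (\<exists>q r. b = a * q + r \<and> (r = 0 \<or> f r < f a)))"

definition euclidean_domain :: "'a::idom itself \<Rightarrow> bool" where
  "euclidean_domain TYPE('a) \<longleftrightarrow> (\<exists>f :: 'a \<Rightarrow> int. euclidean_function f)"

definition is_subring :: "'a::comm_ring_1 set \<Rightarrow> bool" where
  "is_subring F \<longleftrightarrow> 0 \<in> F \<and> 1 \<in> F \<and>
     (\<forall>x\<in>F. \<forall>y\<in>F. x + y \<in> F \<and> x * y \<in> F \<and> - x \<in> F)"

definition is_subfield :: "'a::comm_ring_1 set \<Rightarrow> bool" where
  "is_subfield F \<longleftrightarrow> is_subring F \<and> (\<forall>x\<in>F. x \<noteq> 0 \<longrightarrow> (\<exists>y\<in>F. x * y = 1))"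

definition contains_field :: "'a::comm_ring_1 itself \<Rightarrow> bool" where
  "contains_field TYPE('a) \<longleftrightarrow> (\<exists>F :: 'a set. is_subfield F)"

text \<open>Egyptian: every nonzero element of the fraction field is a sum of reciprocals
  of distinct nonzero elements of D (a finite set of nonzero elements).\<close>
definition egyptian :: "'a::idom itself \<Rightarrow> bool" where
  "egyptian TYPE('a) \<longleftrightarrow>
     (\<forall>x :: 'a fract. x \<noteq> 0 \<longrightarrow>
        (\<exists>S :: 'a set. finite S \<and> 0 \<notin> S \<and> x = (\<Sum>s\<in>S. inverse (Fract s 1))))"

end

(*
  A domain without a subfield has characteristic 0 and contains an integer z that is neither
  zero nor a unit: otherwise the images of the integers, or of the rationals, would form a
  subfield.

  Call E the set of sums of reciprocals of finite sets of nonzero elements.  E is a subring of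
  the fraction field.  The point is that 1/d can be rewritten as the sum of 1/(m d) over an
  Egyptian fraction 1 = sum of 1/m whose denominators m are all large, so a repeated
  reciprocal can be split into terms avoiding any given finite set; characteristic 0 keeps
  the elements m d distinct.

  Every nonzero x lies in E by induction on its Euclidean value f x: some power z^k has
  f (z^k) >= f x, and dividing it by x gives z^k = x q + r with q nonzero and r = 0 or
  f r < f x.  Hence x = (z^k - r) / q lies in E, and so does every a / b = a * (1 / b).
*)
theory Submission
  imports Defs HOL.Rat "HOL-Number_Theory.Cong"
begin

lemma harmonic_block_ge_half:
  assumes "1 \<le> a"
  shows "1 / 2 \<le> (\<Sum>j\<in>{a<..2 * a}. 1 / of_nat j :: rat)"
proof -
  have "of_nat (card {a<..2 * a}) * (1 / of_nat (2 * a)) \<le> (\<Sum>j\<in>{a<..2 * a}. 1 / of_nat j :: rat)"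
    by (rule sum_bounded_below) (use assms in \<open>auto simp: field_simps\<close>)
  moreover have "of_nat (card {a<..2 * a}) * (1 / of_nat (2 * a) :: rat) = 1 / 2"
    using assms by simp
  ultimately show ?thesis by simp
qed

lemma harmonic_block_ge_1:
  assumes "1 \<le> N"
  shows "1 \<le> (\<Sum>j\<in>{N<..4 * N}. 1 / of_nat j :: rat)"
proof -
  have "{N<..4 * N} = {N<..2 * N} \<union> {2 * N<..2 * (2 * N)}" by auto
  then have "(\<Sum>j\<in>{N<..4 * N}. 1 / of_nat j :: rat)
      = (\<Sum>j\<in>{N<..2 * N}. 1 / of_nat j) + (\<Sum>j\<in>{2 * N<..2 * (2 * N)}. 1 / of_nat j)"
    by (simp add: sum.union_disjoint ivl_disj_int)
  then show ?thesis
    using harmonic_block_ge_half[of N] harmonic_block_ge_half[of "2 * N"] assms by simp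
qed

lemma positive_rat_cases:
  assumes "0 < (r::rat)"
  obtains p q :: nat where "0 < p" "0 < q" "r = of_nat p / of_nat q"
proof -
  obtain a b where ab: "quotient_of r = (a, b)" by (cases "quotient_of r")
  have "0 < b" "r = of_int a / of_int b"
    using quotient_of_denom_pos[OF ab] quotient_of_div[OF ab] by simp_all
  moreover from this assms have "0 < a" by (simp add: zero_less_divide_iff)
  ultimately show ?thesis
    using that[of "nat a" "nat b"] by simp
qed

text \<open>Fibonacci--Sylvester greedy step: for \<open>c = \<lceil>q/p\<rceil>\<close> the remainder
  \<open>p/q - 1/c = (p c - q)/(q c)\<close> has the smaller numerator \<open>p c - q < p\<close> and is below \<open>1/c\<close>,
  so the recursion continues with denominators above \<open>c\<close>.\<close>
lemma egyptian_fraction_greedy: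
  fixes p q k :: nat
  assumes "0 < p" "p * k < q" "1 \<le> k"
  shows "\<exists>M. finite M \<and> (\<forall>m\<in>M. k < m) \<and> (\<Sum>m\<in>M. 1 / of_nat m :: rat) = of_nat p / of_nat q"
  using assms
proof (induction p arbitrary: q k rule: less_induct)
  case (less p)
  have "0 < q" using less.prems by simp
  have "k \<le> q div p" using less.prems by (simp add: less_eq_div_iff_mult_less_eq mult.commute)
  show ?case
  proof (cases "p dvd q")
    case True
    define c where "c = q div p"
    have "q = p * c" using True unfolding c_def by simp
    then have "k < c" "1 / of_nat c = (of_nat p / of_nat q :: rat)"
      using less.prems by (simp_all add: field_simps)
    then show ?thesis by (intro exI[of _ "{c}"]) simp
  next
    case False
    define c where "c = q div p + 1"
    define p' where "p' = p * c - q"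
    have "q mod p < p" "0 < q mod p" using less.prems(1) False by (simp_all add: mod_greater_zero_iff_not_dvd)
    moreover have "p * (q div p) + q mod p = q" by (rule mult_div_mod_eq)
    moreover have "p * c = p * (q div p) + p" unfolding c_def by simp
    ultimately have pc: "p * c = q + p'" "0 < p'" "p' < p"
      unfolding p'_def by linarith+
    have "k < c" using \<open>k \<le> q div p\<close> unfolding c_def by simp
    have "p \<le> p * k" using less.prems(3) by simp
    then have "p' < q" using pc less.prems(2) by linarith
    then have "p' * c < q * c" using \<open>k < c\<close> by simp
    then obtain M where M: "finite M" "\<forall>m\<in>M. c < m"
        "(\<Sum>m\<in>M. 1 / of_nat m :: rat) = of_nat p' / of_nat (q * c)"
      using less.IH[OF \<open>p' < p\<close> \<open>0 < p'\<close> \<open>p' * c < q * c\<close>] \<open>k < c\<close> by auto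
    have "(\<Sum>m\<in>insert c M. 1 / of_nat m :: rat) = 1 / of_nat c + of_nat p' / of_nat (q * c)"
      using M by auto
    also have "\<dots> = of_nat (p * c) / (of_nat q * of_nat c)"
      using pc \<open>0 < q\<close> \<open>k < c\<close> by (simp add: field_simps)
    also have "\<dots> = of_nat p / of_nat q"
      using \<open>k < c\<close> by simp
    finally show ?thesis using M \<open>k < c\<close> by (intro exI[of _ "insert c M"]) auto
  qed
qed

lemma egyptian_fraction_above:
  fixes r :: rat
  assumes "1 \<le> N" "N \<le> n" "0 < r" "r \<le> (\<Sum>j\<in>{N<..n}. 1 / of_nat j)"
  shows "\<exists>M. finite M \<and> (\<forall>m\<in>M. N < m) \<and> (\<Sum>m\<in>M. 1 / of_nat m) = r"
  using assms(2-)
proof (induction n arbitrary: r rule: nat_induct_at_least)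
  case base
  then show ?case by simp
next
  case (Suc n)
  let ?H = "\<Sum>j\<in>{N<..n}. 1 / of_nat j :: rat"
  show ?case
  proof (cases "r \<le> ?H")
    case True
    with Suc show ?thesis by blast
  next
    case False
    have "{N<..Suc n} = insert (Suc n) {N<..n}" using Suc.hyps by auto
    then have "r - ?H \<le> 1 / of_nat (Suc n)" using Suc.prems by simp
    also have "\<dots> < 1 / of_nat n" using Suc.hyps assms(1) by (simp add: field_simps)
    finally have "r - ?H < 1 / of_nat n" .
    moreover obtain p q :: nat where pq: "0 < p" "0 < q" "r - ?H = of_nat p / of_nat q"
      using False positive_rat_cases[of "r - ?H"] by auto
    ultimately have "p * n < q"
      using Suc.hyps assms(1) by (simp add: field_simps flip: of_nat_mult)
    moreover have "1 \<le> n" using Suc.hyps assms(1) by simp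
    ultimately obtain M where M: "finite M" "\<forall>m\<in>M. n < m" "(\<Sum>m\<in>M. 1 / of_nat m :: rat) = r - ?H"
      using egyptian_fraction_greedy[OF \<open>0 < p\<close>] pq(3) by metis
    have "{N<..n} \<inter> M = {}" using M(2) by auto
    then have "(\<Sum>m\<in>{N<..n} \<union> M. 1 / of_nat m :: rat) = r"
      using M by (simp add: sum.union_disjoint)
    with M(1,2) Suc.hyps show ?thesis
      by (intro exI[of _ "{N<..n} \<union> M"]) auto
  qed
qed

lemma egyptian_one_above:
  "\<exists>M. finite M \<and> (\<forall>m\<in>M. N < m) \<and> (\<Sum>m\<in>M. 1 / of_nat m :: rat) = 1"
proof -
  have "1 \<le> Suc N" by simp
  from egyptian_fraction_above[OF this _ _ harmonic_block_ge_1[OF this]]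
  obtain M where "finite M" "\<forall>m\<in>M. Suc N < m" "(\<Sum>m\<in>M. 1 / of_nat m :: rat) = 1"
    by auto
  then show ?thesis by (intro exI[of _ M]) auto
qed

(* Qualified because HOL.Rat declares a constant Fract as well. *)
abbreviation fract_of :: "'a::idom \<Rightarrow> 'a fract" where
  "fract_of a \<equiv> Fraction_Field.Fract a 1"

lemma sum_inverse_of_nat_mult_prod:
  assumes "finite M" "\<forall>m\<in>M. of_nat m \<noteq> (0::'b::field)"
  shows "(\<Sum>m\<in>M. inverse (of_nat m :: 'b)) * of_nat (\<Prod>M) = of_nat (\<Sum>m\<in>M. \<Prod>M div m)"
proof -
  have "inverse (of_nat m :: 'b) * of_nat (\<Prod>M) = of_nat (\<Prod>M div m)" if "m \<in> M" for m
  proof -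
    have "\<Prod>M = (\<Prod>M div m) * m" using dvd_prodI[OF assms(1) that, of id] by simp
    then show ?thesis using assms(2) that by (metis nonzero_mult_div_cancel_right of_nat_mult divide_inverse_commute)
  qed
  then show ?thesis by (simp add: sum_distrib_right)
qed

lemma sum_inverse_of_nat_eq_1_transfer:
  assumes "finite M" "0 \<notin> M" "CHAR('b::field) = 0"
    and "(\<Sum>m\<in>M. 1 / of_nat m :: rat) = 1"
  shows "(\<Sum>m\<in>M. inverse (of_nat m) :: 'b) = 1"
proof -
  have nonzero: "\<forall>m\<in>M. of_nat m \<noteq> (0::rat)" "\<forall>m\<in>M. of_nat m \<noteq> (0::'b)"
    using assms(2,3) unfolding CHAR_eq0_iff by (metis of_nat_eq_0_iff, metis gr0I)
  have "of_nat (\<Sum>m\<in>M. \<Prod>M div m) = (of_nat (\<Prod>M) :: rat)"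
    using sum_inverse_of_nat_mult_prod[OF assms(1) nonzero(1)] assms(4) by (simp add: divide_inverse)
  then have "(\<Sum>m\<in>M. \<Prod>M div m) = \<Prod>M" by (simp only: of_nat_eq_iff)
  then have "(\<Sum>m\<in>M. inverse (of_nat m) :: 'b) * of_nat (\<Prod>M) = of_nat (\<Prod>M)"
    using sum_inverse_of_nat_mult_prod[OF assms(1) nonzero(2)] by simp
  moreover have "of_nat (\<Prod>M) \<noteq> (0::'b)" using nonzero(2) assms(1) by (simp add: prod_zero_iff)
  ultimately show ?thesis by simp
qed

lemma semiring_char_fract [simp]: "CHAR('a::idom fract) = CHAR('a)"
proof (rule CHAR_eqI)
  have "of_nat n = (0 :: 'a fract) \<longleftrightarrow> of_nat n = (0 :: 'a)" for n
    by (simp add: of_nat_fract Zero_fract_def eq_fract)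
  then show "of_nat CHAR('a) = (0 :: 'a fract)" "\<And>n. of_nat n = (0 :: 'a fract) \<Longrightarrow> CHAR('a) dvd n"
    by (simp_all add: of_nat_eq_0_iff_char_dvd)
qed

lemma fract_of_of_int: "fract_of (of_int n :: 'a::idom) = of_int n"
  by (cases n rule: int_cases2) (simp_all add: Fraction_Field.Fract_of_nat_eq flip: minus_fract)

lemma reciprocal_split_avoiding:
  fixes d :: "'a::idom"
  assumes "CHAR('a) = 0" "finite S" "d \<noteq> 0"
  obtains T where "finite T" "0 \<notin> T" "S \<inter> T = {}"
    "inverse (fract_of d) = (\<Sum>t\<in>T. inverse (fract_of t))"
proof -
  define h where "h m = of_nat m * d" for m
  have "inj h" using assms(1,3) by (auto intro!: injI simp: h_def of_nat_eq_iff_cong_CHAR)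
  then obtain N where N: "\<forall>m\<in>h -` S. m \<le> N"
    using assms(2) finite_vimageI finite_nat_set_iff_bounded_le by blast
  obtain M where M: "finite M" "\<forall>m\<in>M. N < m" "(\<Sum>m\<in>M. 1 / of_nat m :: rat) = 1"
    using egyptian_one_above by blast
  then have "0 \<notin> M" by auto
  have "(\<Sum>t\<in>h ` M. inverse (fract_of t)) = (\<Sum>m\<in>M. inverse (fract_of (h m)))"
    using inj_on_subset[OF \<open>inj h\<close> subset_UNIV] by (simp add: sum.reindex)
  also have "\<dots> = (\<Sum>m\<in>M. inverse (of_nat m) * inverse (fract_of d))"
    by (simp add: h_def of_nat_fract mult.commute)
  also have "\<dots> = inverse (fract_of d)"
    using sum_inverse_of_nat_eq_1_transfer[where 'b = "'a fract", OF M(1) \<open>0 \<notin> M\<close> _ M(3)] assms(1)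
    by (simp flip: sum_distrib_right)
  finally show ?thesis
    using that[of "h ` M"] M N \<open>0 \<notin> M\<close> assms by (force simp: h_def of_nat_eq_0_iff_char_dvd)
qed

definition egyptian_sums :: "'a::idom fract set" where
  "egyptian_sums = {\<Sum>s\<in>S. inverse (fract_of s) | S. finite S \<and> 0 \<notin> S}"

lemma zero_in_egyptian_sums: "0 \<in> egyptian_sums"
  unfolding egyptian_sums_def by (intro CollectI exI[of _ "{}"]) simp

lemma inverse_fract_of_in_egyptian_sums: "d \<noteq> 0 \<Longrightarrow> inverse (fract_of d) \<in> egyptian_sums"
  unfolding egyptian_sums_def by (intro CollectI exI[of _ "{d}"]) simp

lemma one_in_egyptian_sums: "1 \<in> egyptian_sums"
  using inverse_fract_of_in_egyptian_sums[of 1] by (simp add: One_fract_def)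

lemma egyptian_sums_add_inverse:
  assumes "CHAR('a) = 0" "x \<in> egyptian_sums" "(d::'a::idom) \<noteq> 0"
  shows "x + inverse (fract_of d) \<in> egyptian_sums"
proof -
  obtain S where S: "finite S" "0 \<notin> S" "x = (\<Sum>s\<in>S. inverse (fract_of s))"
    using assms(2) unfolding egyptian_sums_def by blast
  obtain T where T: "finite T" "0 \<notin> T" "S \<inter> T = {}"
    "inverse (fract_of d) = (\<Sum>t\<in>T. inverse (fract_of t))"
    using reciprocal_split_avoiding[OF assms(1) S(1) assms(3)] .
  have "x + inverse (fract_of d) = (\<Sum>s\<in>S \<union> T. inverse (fract_of s))"
    using S T by (simp add: sum.union_disjoint)
  with S T show ?thesis unfolding egyptian_sums_def by blast
qed

lemma egyptian_sums_add:
  assumes "CHAR('a) = 0" "x \<in> egyptian_sums" "(y :: 'a::idom fract) \<in> egyptian_sums"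
  shows "x + y \<in> egyptian_sums"
proof -
  obtain T where T: "finite T" "0 \<notin> T" "y = (\<Sum>t\<in>T. inverse (fract_of t))"
    using assms(3) unfolding egyptian_sums_def by blast
  have "x + (\<Sum>t\<in>T. inverse (fract_of t)) \<in> egyptian_sums"
    using T(1,2)
  proof (induction T rule: finite_induct)
    case empty
    then show ?case using assms(2) by simp
  next
    case (insert t T)
    have "(x + (\<Sum>s\<in>T. inverse (fract_of s))) + inverse (fract_of t) \<in> egyptian_sums"
      using insert egyptian_sums_add_inverse[OF assms(1)] by simp
    moreover have "x + (\<Sum>s\<in>insert t T. inverse (fract_of s))
        = (x + (\<Sum>s\<in>T. inverse (fract_of s))) + inverse (fract_of t)"
      using insert.hyps by (simp add: algebra_simps)
    ultimately show ?case by metis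
  qed
  with T(3) show ?thesis by simp
qed

lemma egyptian_sums_sum:
  assumes "CHAR('a) = 0" "finite I" "\<And>i. i \<in> I \<Longrightarrow> g i \<in> (egyptian_sums :: 'a::idom fract set)"
  shows "sum g I \<in> egyptian_sums"
  using assms(2,3)
  by (induction I rule: finite_induct) (simp_all add: zero_in_egyptian_sums egyptian_sums_add[OF assms(1)])

lemma inverse_fract_of_uminus: "inverse (fract_of (- d)) = - inverse (fract_of (d::'a::idom))"
  using minus_fract_cancel[of "- 1" d] by simp

lemma egyptian_sums_uminus:
  assumes "x \<in> egyptian_sums"
  shows "- x \<in> egyptian_sums"
proof -
  obtain S where S: "finite S" "0 \<notin> S" "x = (\<Sum>s\<in>S. inverse (fract_of s))"
    using assms unfolding egyptian_sums_def by blast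
  have "- x = (\<Sum>s\<in>uminus ` S. inverse (fract_of s))"
    using S(3) by (simp add: sum.reindex sum_negf inverse_fract_of_uminus del: inverse_fract)
  moreover have "finite (uminus ` S)" "0 \<notin> uminus ` S" using S by auto
  ultimately show ?thesis unfolding egyptian_sums_def by blast
qed

lemma egyptian_sums_mult:
  assumes "CHAR('a) = 0" "x \<in> egyptian_sums" "(y :: 'a::idom fract) \<in> egyptian_sums"
  shows "x * y \<in> egyptian_sums"
proof -
  obtain S where S: "finite S" "0 \<notin> S" "x = (\<Sum>s\<in>S. inverse (fract_of s))"
    using assms(2) unfolding egyptian_sums_def by blast
  obtain T where T: "finite T" "0 \<notin> T" "y = (\<Sum>t\<in>T. inverse (fract_of t))"
    using assms(3) unfolding egyptian_sums_def by blast
  have "x * y = (\<Sum>s\<in>S. \<Sum>t\<in>T. inverse (fract_of (s * t)))"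
    using S(3) T(3) by (simp add: sum_product)
  also have "\<dots> \<in> egyptian_sums"
    using S T by (intro egyptian_sums_sum[OF assms(1)] inverse_fract_of_in_egyptian_sums) auto
  finally show ?thesis .
qed

lemma of_int_in_egyptian_sums:
  assumes "CHAR('a::idom) = 0"
  shows "of_int n \<in> (egyptian_sums :: 'a fract set)"
proof -
  have "of_nat m \<in> (egyptian_sums :: 'a fract set)" for m
    using egyptian_sums_sum[OF assms, of "{..<m}" "\<lambda>_. 1"] by (simp add: one_in_egyptian_sums)
  then show ?thesis
    by (cases n rule: int_cases2) (simp_all add: egyptian_sums_uminus)
qed

lemma contains_field_if_of_int_dvd_1:
  assumes "\<And>n. of_int n \<noteq> (0::'a::idom) \<Longrightarrow> of_int n dvd (1::'a)"
  shows "contains_field TYPE('a)"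
proof -
  define F where "F = {x::'a. \<exists>a b. of_int b \<noteq> (0::'a) \<and> x * of_int b = of_int a}"
  have "is_subfield F" unfolding is_subfield_def is_subring_def
  proof (intro conjI ballI impI)
    show "0 \<in> F" unfolding F_def by (intro CollectI exI[of _ 0] exI[of _ 1]) simp
    show "1 \<in> F" unfolding F_def by (intro CollectI exI[of _ 1] exI[of _ 1]) simp
  next
    fix x y assume "x \<in> F" "y \<in> F"
    then obtain a b a' b' where ab: "of_int b \<noteq> (0::'a)" "x * of_int b = of_int a"
      and ab': "of_int b' \<noteq> (0::'a)" "y * of_int b' = of_int a'" unfolding F_def by blast
    have "(x + y) * of_int (b * b') = of_int (a * b' + a' * b)"
      "(x * y) * of_int (b * b') = of_int (a * a')"
      "(- x) * of_int b = of_int (- a)"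
      using ab ab' by (simp_all add: algebra_simps flip: ab(2) ab'(2))
    moreover have "of_int (b * b') \<noteq> (0::'a)" using ab ab' by simp
    ultimately show "x + y \<in> F" "x * y \<in> F" "- x \<in> F"
      using ab unfolding F_def by blast+
  next
    fix x assume "x \<in> F" "x \<noteq> 0"
    then obtain a b where ab: "of_int b \<noteq> (0::'a)" "x * of_int b = of_int a" unfolding F_def by blast
    have "x * of_int b \<noteq> 0" using \<open>x \<noteq> 0\<close> ab(1) by simp
    with ab(2) have "of_int a \<noteq> (0::'a)" by simp
    then have "of_int a dvd (1::'a)" by (rule assms)
    then obtain y :: 'a where y: "of_int a * y = 1" by (metis dvd_def)
    have "(y * of_int b) * of_int a = of_int b"
      using y by (metis mult.assoc mult.commute mult_1)
    with \<open>of_int a \<noteq> 0\<close> have "y * of_int b \<in> F" unfolding F_def by blast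
    moreover have "x * (y * of_int b) = 1"
      using ab(2) y by (metis mult.assoc mult.commute)
    ultimately show "\<exists>y\<in>F. x * y = 1" by blast
  qed
  then show ?thesis unfolding contains_field_def by blast
qed

lemma of_int_dvd_1_if_CHAR_nonzero:
  assumes "CHAR('a::idom) \<noteq> 0" "of_int n \<noteq> (0::'a)"
  shows "of_int n dvd (1::'a)"
proof -
  have "prime (int CHAR('a))" using prime_CHAR_semidom assms(1) by auto
  moreover have "\<not> int CHAR('a) dvd n" using assms(2) by (simp add: of_int_eq_0_iff_char_dvd)
  ultimately have "gcd n (int CHAR('a)) = 1"
    by (metis prime_imp_coprime coprime_commute coprime_iff_gcd_eq_1)
  then obtain u v where "u * n + v * int CHAR('a) = 1" using bezout_int by metis
  then have "of_int u * of_int n + of_int v * of_nat CHAR('a) = (1::'a)"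
    by (metis of_int_1 of_int_add of_int_mult of_int_of_nat_eq)
  then have "1 = of_int n * (of_int u :: 'a)" by (simp add: mult.commute)
  then show ?thesis ..
qed

lemma euclidean_function_one_le:
  assumes "euclidean_function f" "(a::'a::idom) \<noteq> 0"
  shows "f 1 \<le> f a"
  using assms unfolding euclidean_function_def by (metis mult_1 one_neq_zero)

lemma euclidean_function_less_mult:
  assumes f: "euclidean_function f" and "(a::'a::idom) \<noteq> 0" "b \<noteq> 0" "\<not> b dvd 1"
  shows "f a < f (a * b)"
proof -
  obtain q r where qr: "a = a * b * q + r" "r = 0 \<or> f r < f (a * b)"
    using f assms(2,3) unfolding euclidean_function_def by (metis mult_eq_0_iff)
  have "r = a * (1 - b * q)" using qr(1) by (simp add: algebra_simps)
  moreover have "1 - b * q \<noteq> 0" using assms(4) by (metis dvd_triv_left eq_iff_diff_eq_0)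
  ultimately have "f a \<le> f r" "r \<noteq> 0"
    using f assms(2) unfolding euclidean_function_def by simp_all
  with qr(2) show ?thesis by simp
qed

lemma euclidean_function_power_ge:
  assumes "euclidean_function f" "(z::'a::idom) \<noteq> 0" "\<not> z dvd 1"
  shows "f 1 + int k \<le> f (z ^ k)"
proof (induction k)
  case (Suc k)
  then show ?case
    using euclidean_function_less_mult[OF assms(1) _ assms(2,3), of "z ^ k"] assms(2)
    by (simp add: mult.commute)
qed simp

lemma euclidean_division_of_power:
  assumes f: "euclidean_function f" and "(z::'a::idom) \<noteq> 0" "\<not> z dvd 1" "x \<noteq> 0"
  obtains k q r where "q \<noteq> 0" "z ^ k = x * q + r" "r = 0 \<or> f r < f x"
proof -
  define k where "k = nat (f x - f 1)"
  have "f x \<le> f (z ^ k)"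
    using euclidean_function_power_ge[OF assms(1-3), of k] unfolding k_def by linarith
  moreover have "z ^ k \<noteq> 0" using assms(2) by simp
  moreover obtain q r where "z ^ k = x * q + r" "r = 0 \<or> f r < f x"
    using f assms(4) \<open>z ^ k \<noteq> 0\<close> unfolding euclidean_function_def by blast
  ultimately show ?thesis using that by (cases "q = 0") auto
qed

lemma fract_of_in_egyptian_sums:
  fixes f :: "'a::idom \<Rightarrow> int" and x :: 'a
  assumes "CHAR('a) = 0" "euclidean_function f" "of_int n \<noteq> (0::'a)" "\<not> of_int n dvd (1::'a)" "x \<noteq> 0"
  shows "fract_of x \<in> egyptian_sums"
  using assms(5)
proof (induction "nat (f x - f 1)" arbitrary: x rule: less_induct)
  case less
  obtain k q r where qr: "q \<noteq> 0" "(of_int n) ^ k = x * q + r" "r = 0 \<or> f r < f x"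
    using euclidean_division_of_power[OF assms(2-4) less.prems] .
  have "fract_of r \<in> egyptian_sums"
  proof (cases "r = 0")
    case True
    then show ?thesis using zero_in_egyptian_sums by (simp add: Zero_fract_def)
  next
    case False
    then have "nat (f r - f 1) < nat (f x - f 1)"
      using qr(3) euclidean_function_one_le[OF assms(2), of r] by linarith
    with False less.hyps show ?thesis by blast
  qed
  moreover have "fract_of (of_int n ^ k) \<in> (egyptian_sums :: 'a fract set)"
    using of_int_in_egyptian_sums[OF assms(1), of "n ^ k"] by (metis fract_of_of_int of_int_power)
  moreover have "fract_of x = (fract_of (of_int n ^ k) + - fract_of r) * inverse (fract_of q)"
    using qr(1,2) by (simp add: eq_fract)
  ultimately show ?case
    using qr(1) assms(1) by (metis egyptian_sums_add egyptian_sums_uminus egyptian_sums_mult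
        inverse_fract_of_in_egyptian_sums)
qed

theorem corollary2p13:
  assumes "euclidean_domain TYPE('a::idom)"
    and "\<not> contains_field TYPE('a)"
  shows "egyptian TYPE('a)"
proof -
  obtain f :: "'a \<Rightarrow> int" where f: "euclidean_function f"
    using assms(1) unfolding euclidean_domain_def by blast
  obtain n where n: "of_int n \<noteq> (0::'a)" "\<not> of_int n dvd (1::'a)"
    using assms(2) contains_field_if_of_int_dvd_1 by blast
  then have char: "CHAR('a) = 0" using of_int_dvd_1_if_CHAR_nonzero by blast
  have "x \<in> egyptian_sums" if "x \<noteq> 0" for x :: "'a fract"
  proof -
    obtain a b where "x = fract_of a * inverse (fract_of b)" "a \<noteq> 0" "b \<noteq> 0"
      using \<open>x \<noteq> 0\<close> by (cases x rule: Fract_cases_nonzero) auto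
    then show ?thesis
      using egyptian_sums_mult[OF char] fract_of_in_egyptian_sums[OF char f n]
        inverse_fract_of_in_egyptian_sums by metis
  qed
  then show ?thesis unfolding egyptian_def egyptian_sums_def by blast
qed

end
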